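(* Let $\Lambda$ be a lattice of rank $s$ and $\bar a=(a_1,\ldots,a_l)\in(\mathcal F^0(\Lambda,\bar K))^l$. Suppose the convolution ideal generated by $a_1,\ldots,a_l$ in $\mathcal F^0(\Lambda,\bar K)$ contains $s$ nonzero functions $b_1,\ldots,b_s$ with $\mathrm{supp}(b_j)\subseteq\mathbb Zv_j$, $j=1,\ldots,s$, where $v_1,\ldots,v_s\in\Lambda$ are linearly independent. Then every $f\in\bigcap_{j=1}^l\ker(\Delta_{a_j})$ is pluri-periodic, and its period lattice $\Lambda(f)$ contains a rank $s$ sublattice $\sum_{j=1}^sm_j\mathbb Zv_j$ with integers $m_j>0$ depending only on $\bar a$.
   Context: $K=\mathrm{GF}(p^r)$, $\bar K$ an algebraic closure; a lattice is a free abelian group of finite rank. $\mathcal F^0(\Lambda,\bar K)$ is the ring of finitely supported functions $\Lambda\to\bar K$ under convolution $(f*a)(v)=\sum_uf(u)a(v-u)$; $\Delta_a$ acts on all functions $\Lambda\to\bar K$ by $f\mapsto f*a$. The period lattice of $f$ is $\Lambda(f)=\{v\in\Lambda: f(\cdot+v)=f\}$; pluri-periodic means $\Lambda(f)$ has finite index. *)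

theory Defs
  imports "HOL-Analysis.Analysis" "HOL-Computational_Algebra.Polynomial"
begin

text \<open>The lattice of rank s is modelled as int ^ 'n with s = CARD('n).
  Functions on the lattice with values in the field 'k.\<close>

definition finsupp :: "('l \<Rightarrow> 'k::zero) \<Rightarrow> bool" where
  "finsupp a \<longleftrightarrow> finite {u. a u \<noteq> 0}"

definition supp :: "('l \<Rightarrow> 'k::zero) \<Rightarrow> 'l set" where
  "supp a = {u. a u \<noteq> 0}"

definition conv :: "('l::ab_group_add \<Rightarrow> 'k::comm_ring_1) \<Rightarrow> ('l \<Rightarrow> 'k) \<Rightarrow> 'l \<Rightarrow> 'k" where
  "conv f a v = (\<Sum>w\<in>supp a. f (v - w) * a w)"

definition conv_ideal :: "nat \<Rightarrow> (nat \<Rightarrow> 'l::ab_group_add \<Rightarrow> 'k::comm_ring_1) \<Rightarrow> ('l \<Rightarrow> 'k) set" where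
  "conv_ideal l a = {(\<lambda>v. \<Sum>i<l. conv (c i) (a i) v) | c. \<forall>i<l. finsupp (c i)}"

definition period_lattice :: "('l::ab_group_add \<Rightarrow> 'k) \<Rightarrow> 'l set" where
  "period_lattice f = {x. (\<lambda>u. f (u + x)) = f}"

text \<open>Pluri-periodic: the period lattice has finite index, i.e. finitely many cosets.\<close>
definition pluri_periodic :: "('l::ab_group_add \<Rightarrow> 'k) \<Rightarrow> bool" where
  "pluri_periodic f \<longleftrightarrow> finite ((\<lambda>x. (\<lambda>y. x + y) ` period_lattice f) ` UNIV)"

definition lin_indep_int :: "('n::finite \<Rightarrow> int ^ 'm) \<Rightarrow> bool" where
  "lin_indep_int v \<longleftrightarrow> (\<forall>c::'n \<Rightarrow> int. (\<Sum>j\<in>UNIV. c j *s v j) = 0 \<longrightarrow> (\<forall>j. c j = 0))"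

definition alg_closed :: "'k::field itself \<Rightarrow> bool" where
  "alg_closed _ \<longleftrightarrow> (\<forall>q::'k poly. degree q > 0 \<longrightarrow> (\<exists>x. poly q x = 0))"

definition algebraic_over_prime_field :: "'k::field itself \<Rightarrow> bool" where
  "algebraic_over_prime_field _ \<longleftrightarrow>
     (\<forall>x::'k. \<exists>q::'k poly. q \<noteq> 0 \<and> (\<forall>i. coeff q i \<in> range of_int) \<and> poly q x = 0)"

end

theory Submission
  imports Defs "HOL-Computational_Algebra.Primes" "HOL-Computational_Algebra.Group_Closure"
begin

(* Every b_j lies in the convolution ideal, so by associativity and commutativity of
   convolution it annihilates each f killed by all a_i.  As b_j is supported on the line
   Z v_j, convolution with b_j is a polynomial B_j(T_j) in the translation T_j by v_j,
   and after reversing coefficients B_j has nonzero constant term.  Over an algebraic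
   extension of GF(p) every nonzero element is a root of unity, and Frobenius absorbs
   repeated roots, so B_j divides X^N_j - 1; hence T_j^N_j fixes f.  The periods
   N_j v_j are linearly independent, so over the rationals they span, some multiple of
   every unit vector is an integer combination of them, and the period lattice of f
   has finite index. *)

lemma of_nat_power_CHAR:
  assumes "prime CHAR('k::comm_semiring_1)"
  shows "(of_nat n :: 'k) ^ CHAR('k) = of_nat n"
proof (induction n)
  case (Suc n)
  have "(of_nat n + 1 :: 'k) ^ CHAR('k) = of_nat n ^ CHAR('k) + 1 ^ CHAR('k)"
    by (rule freshmans_dream[OF assms refl])
  with Suc show ?case by (simp add: add.commute)
qed (use prime_gt_0_nat[OF assms] in \<open>simp add: zero_power\<close>)

lemma of_int_power_CHAR_power:
  assumes "prime CHAR('k::comm_ring_1)"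
  shows "(of_int z :: 'k) ^ CHAR('k) ^ j = of_int z"
proof -
  have "int CHAR('k) dvd z - z mod int CHAR('k)"
    by (simp add: minus_mod_eq_mult_div)
  then have "(of_int (z - z mod CHAR('k)) :: 'k) = 0"
    by (simp only: of_int_eq_0_iff_char_dvd)
  then have "(of_int z :: 'k) = of_nat (nat (z mod CHAR('k)))"
    using prime_gt_0_nat[OF assms] by simp
  then have "(of_int z :: 'k) ^ CHAR('k) = of_int z"
    using of_nat_power_CHAR[OF assms] by simp
  then show ?thesis
    by (induction j) (simp_all add: power_mult)
qed

lemma poly_power_CHAR_power:
  fixes q :: "'k::comm_ring_1 poly"
  assumes "prime CHAR('k)" and "\<forall>i. coeff q i \<in> range of_int"
  shows "poly q (x ^ CHAR('k) ^ j) = poly q x ^ CHAR('k) ^ j"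
proof -
  have coeff_fixed: "coeff q i ^ CHAR('k) ^ j = coeff q i" for i
    by (metis assms(2) rangeE of_int_power_CHAR_power[OF assms(1)])
  have "poly q (x ^ CHAR('k) ^ j) = (\<Sum>i\<le>degree q. (coeff q i * x ^ i) ^ CHAR('k) ^ j)"
    by (simp add: poly_altdef power_mult_distrib coeff_fixed flip: power_mult)
      (simp add: mult.commute)
  also have "\<dots> = poly q x ^ CHAR('k) ^ j"
    by (simp add: poly_altdef freshmans_dream_sum'[OF assms(1) refl])
  finally show ?thesis .
qed

lemma root_of_unity_if_algebraic_over_prime_field:
  fixes x :: "'k::field"
  assumes "prime CHAR('k)" and "algebraic_over_prime_field TYPE('k)" and "x \<noteq> 0"
  shows "\<exists>n>0. x ^ n = 1"
proof -
  obtain q :: "'k poly" where q: "q \<noteq> 0" "\<forall>i. coeff q i \<in> range of_int" "poly q x = 0"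
    using assms(2) unfolding algebraic_over_prime_field_def by blast
  \<comment> \<open>Frobenius fixes the coefficients of \<open>q\<close>, so every \<open>x^(p^j)\<close> is a root of \<open>q\<close>.\<close>
  define c where "c = CHAR('k)"
  have "c > 1" using assms(1) prime_gt_1_nat c_def by blast
  have "range (\<lambda>j. x ^ c ^ j) \<subseteq> {r. poly q r = 0}"
    using poly_power_CHAR_power[OF assms(1) q(2)] q(3) \<open>c > 1\<close> by (auto simp: c_def)
  then have "finite (range (\<lambda>j. x ^ c ^ j))"
    using poly_roots_finite[OF q(1)] by (rule finite_subset)
  then have "\<not> inj (\<lambda>j. x ^ c ^ j)"
    using finite_imageD infinite_UNIV_nat by blast
  then obtain i j where "i < j" "x ^ c ^ i = x ^ c ^ j"
    unfolding inj_def by (metis linorder_neqE_nat)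
  moreover have "c ^ i < c ^ j"
    using \<open>i < j\<close> \<open>c > 1\<close> by (simp add: power_strict_increasing)
  ultimately have "x ^ c ^ i * x ^ (c ^ j - c ^ i) = x ^ c ^ i * 1"
    by (metis le_add_diff_inverse less_imp_le mult_1_right power_add)
  then show ?thesis
    using \<open>c ^ i < c ^ j\<close> assms(3) by (intro exI[of _ "c ^ j - c ^ i"]) simp
qed

lemma X_power_minus_one_dvd:
  "(monom 1 a - 1 :: 'a::comm_ring_1 poly) dvd monom 1 (a * b) - 1"
proof -
  have "(monom 1 (a * b) - 1 :: 'a poly) = (monom 1 a) ^ b - 1"
    by (simp add: monom_altdef power_mult)
  also have "\<dots> = (monom 1 a - 1) * (\<Sum>i<b. (monom 1 a) ^ i)"
    by (rule power_diff_1_eq)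
  finally show ?thesis by simp
qed

lemma X_power_minus_one_power_CHAR:
  assumes "prime CHAR('a::comm_ring_1)"
  shows "(monom 1 n - 1 :: 'a poly) ^ CHAR('a) = monom 1 (n * CHAR('a)) - 1"
proof -
  have "(monom 1 n - 1 + 1 :: 'a poly) ^ CHAR('a) = (monom 1 n - 1) ^ CHAR('a) + 1 ^ CHAR('a)"
    by (rule freshmans_dream) (use assms in simp_all)
  then show ?thesis
    by (simp add: monom_altdef power_mult eq_diff_eq)
qed

lemma dvd_X_power_minus_one:
  fixes B :: "'k::field poly"
  assumes "prime CHAR('k)" and "alg_closed TYPE('k)"
    and roots_of_unity: "\<And>x::'k. x \<noteq> 0 \<Longrightarrow> \<exists>n>0. x ^ n = 1"
    and "poly B 0 \<noteq> 0"
  shows "\<exists>N>0. B dvd monom 1 N - 1"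
  using assms(4)
proof (induction "degree B" arbitrary: B)
  case 0
  then have "is_unit B" by (metis is_unit_iff_degree poly_0)
  then show ?case by (intro exI[of _ 1]) auto
next
  case (Suc d)
  obtain r where "poly B r = 0"
    using assms(2) Suc.hyps(2) unfolding alg_closed_def by (metis zero_less_Suc)
  then obtain Q where B: "B = [:-r, 1:] * Q"
    by (metis dvdE poly_eq_0_iff_dvd)
  have "poly Q 0 \<noteq> 0" and "r \<noteq> 0"
    using Suc.prems by (auto simp: B)
  have "degree B = Suc (degree Q)"
    using \<open>poly Q 0 \<noteq> 0\<close> unfolding B by (subst degree_mult_eq) auto
  then obtain M where "M > 0" and Q_dvd: "Q dvd monom 1 M - 1"
    using Suc.hyps \<open>poly Q 0 \<noteq> 0\<close> by auto
  obtain n where "n > 0" and "r ^ n = 1"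
    using roots_of_unity[OF \<open>r \<noteq> 0\<close>] by blast
  define K where "K = M * n"
  have "[:-r, 1:] dvd (monom 1 K - 1 :: 'k poly)"
    using \<open>r ^ n = 1\<close> by (simp add: poly_eq_0_iff_dvd[symmetric] poly_monom K_def power_mult
        mult.commute[of M])
  moreover have "Q dvd monom 1 K - 1"
    using Q_dvd X_power_minus_one_dvd dvd_trans unfolding K_def by blast
  \<comment> \<open>A repeated root is absorbed by \<open>(X^K - 1)^p = X^(K p) - 1\<close>.\<close>
  ultimately have "B dvd (monom 1 K - 1) ^ 2"
    unfolding B power2_eq_square by (rule mult_dvd_mono)
  also have "\<dots> dvd (monom 1 K - 1) ^ CHAR('k)"
    using prime_ge_2_nat[OF assms(1)] by (rule le_imp_power_dvd)
  finally have "B dvd monom 1 (K * CHAR('k)) - 1"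
    by (simp only: X_power_minus_one_power_CHAR[OF assms(1)])
  moreover have "K * CHAR('k) > 0"
    using \<open>M > 0\<close> \<open>n > 0\<close> prime_gt_0_nat[OF assms(1)] by (simp add: K_def)
  ultimately show ?case by blast
qed

lemma conv_eq_sum_superset:
  assumes "finite S" and "supp a \<subseteq> S"
  shows "conv f a v = (\<Sum>w\<in>S. f (v - w) * a w)"
  unfolding conv_def by (rule sum.mono_neutral_left) (use assms in \<open>auto simp: supp_def\<close>)

lemma supp_conv_subset: "supp (conv c a) \<subseteq> (\<lambda>(t, u). t + u) ` (supp c \<times> supp a)"
proof
  fix w assume "w \<in> supp (conv c a)"
  then obtain u where "u \<in> supp a" and "c (w - u) * a u \<noteq> 0"
    unfolding supp_def conv_def by (metis (mono_tags, lifting) mem_Collect_eq sum.neutral)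
  then show "w \<in> (\<lambda>(t, u). t + u) ` (supp c \<times> supp a)"
    by (intro image_eqI[of _ _ "(w - u, u)"]) (auto simp: supp_def)
qed

lemma finsupp_conv: "finsupp c \<Longrightarrow> finsupp a \<Longrightarrow> finsupp (conv c a)"
  using finite_subset[OF supp_conv_subset] unfolding finsupp_def supp_def by blast

lemma conv_zero_left [simp]: "conv (\<lambda>_. 0) a = (\<lambda>_. 0)"
  by (simp add: conv_def fun_eq_iff)

lemma conv_commute:
  fixes a c :: "'l::ab_group_add \<Rightarrow> 'k::comm_ring_1"
  assumes "finsupp a" and "finsupp c"
  shows "conv c a = conv a c"
proof
  fix v
  define S where "S = (\<lambda>w. v - w) ` supp a \<union> supp c"
  have "finite S" using assms by (simp add: S_def finsupp_def supp_def)
  have "supp a \<subseteq> (\<lambda>t. v - t) ` S"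
  proof
    fix w assume "w \<in> supp a"
    then have "v - w \<in> S" by (simp add: S_def)
    then show "w \<in> (\<lambda>t. v - t) ` S" by (rule rev_image_eqI) simp
  qed
  then have "conv c a v = (\<Sum>w\<in>(\<lambda>t. v - t) ` S. c (v - w) * a w)"
    using \<open>finite S\<close> by (intro conv_eq_sum_superset) auto
  also have "\<dots> = (\<Sum>t\<in>S. a (v - t) * c t)"
    by (subst sum.reindex) (auto simp: inj_on_def mult.commute)
  also have "\<dots> = conv a c v"
    by (rule conv_eq_sum_superset[symmetric]) (use \<open>finite S\<close> in \<open>auto simp: S_def\<close>)
  finally show "conv c a v = conv a c v" .
qed

lemma conv_assoc:
  fixes f :: "'l::ab_group_add \<Rightarrow> 'k::comm_ring_1"
  assumes "finsupp c" and "finsupp a"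
  shows "conv f (conv c a) = conv (conv f c) a"
proof
  fix v
  define S where "S = (\<lambda>(t, u). t + u) ` (supp c \<times> supp a)"
  have "finite S" using assms by (simp add: S_def finsupp_def supp_def)
  have inner: "(\<Sum>w\<in>S. f (v - w) * c (w - u)) = conv f c (v - u)" if "u \<in> supp a" for u
  proof -
    have "supp c \<subseteq> (\<lambda>w. w - u) ` S"
    proof
      fix t assume "t \<in> supp c"
      then have "t + u \<in> S" using that by (auto simp: S_def)
      then show "t \<in> (\<lambda>w. w - u) ` S" by (rule rev_image_eqI) simp
    qed
    then have "conv f c (v - u) = (\<Sum>t\<in>(\<lambda>w. w - u) ` S. f (v - u - t) * c t)"
      using \<open>finite S\<close> by (intro conv_eq_sum_superset) auto
    also have "\<dots> = (\<Sum>w\<in>S. f (v - w) * c (w - u))"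
      by (subst sum.reindex) (auto simp: inj_on_def)
    finally show ?thesis by simp
  qed
  have "conv f (conv c a) v = (\<Sum>w\<in>S. f (v - w) * (\<Sum>u\<in>supp a. c (w - u) * a u))"
    by (simp add: conv_eq_sum_superset[OF \<open>finite S\<close> supp_conv_subset[of c a, folded S_def]]
        conv_def[of c])
  also have "\<dots> = (\<Sum>u\<in>supp a. (\<Sum>w\<in>S. f (v - w) * c (w - u)) * a u)"
    by (simp add: sum_distrib_left sum_distrib_right sum.swap[of _ S] mult.assoc)
  also have "\<dots> = conv (conv f c) a v"
    by (simp add: inner conv_def[of "conv f c"])
  finally show "conv f (conv c a) v = conv (conv f c) a v" .
qed

lemma conv_sum_right:
  fixes f :: "'l::ab_group_add \<Rightarrow> 'k::comm_ring_1"
  assumes "finite I" and "\<forall>i\<in>I. finsupp (g i)"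
  shows "conv f (\<lambda>v. \<Sum>i\<in>I. g i v) = (\<lambda>v. \<Sum>i\<in>I. conv f (g i) v)"
proof
  fix v
  define S where "S = (\<Union>i\<in>I. supp (g i))"
  have "finite S" using assms by (auto simp: S_def finsupp_def supp_def)
  have "supp (\<lambda>v. \<Sum>i\<in>I. g i v) \<subseteq> S"
    by (auto simp: S_def supp_def intro: ccontr)
  then have "conv f (\<lambda>v. \<Sum>i\<in>I. g i v) v = (\<Sum>i\<in>I. \<Sum>w\<in>S. f (v - w) * g i w)"
    by (simp add: conv_eq_sum_superset[OF \<open>finite S\<close>] sum_distrib_left sum.swap[of _ S])
  also have "\<dots> = (\<Sum>i\<in>I. conv f (g i) v)"
    by (rule sum.cong[OF refl], rule conv_eq_sum_superset[symmetric, OF \<open>finite S\<close>])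
      (auto simp: S_def)
  finally show "conv f (\<lambda>v. \<Sum>i\<in>I. g i v) v = (\<Sum>i\<in>I. conv f (g i) v)" .
qed

lemma conv_ideal_finsupp:
  assumes "\<forall>i<l. finsupp (a i)" and "b \<in> conv_ideal l a"
  shows "finsupp b"
proof -
  obtain c where b: "b = (\<lambda>v. \<Sum>i<l. conv (c i) (a i) v)" and "\<forall>i<l. finsupp (c i)"
    using assms(2) unfolding conv_ideal_def by blast
  then have "finite (\<Union>i<l. supp (conv (c i) (a i)))"
    using assms(1) finsupp_conv by (auto simp: finsupp_def supp_def)
  moreover have "supp b \<subseteq> (\<Union>i<l. supp (conv (c i) (a i)))"
    by (auto simp: b supp_def intro: ccontr)
  ultimately show ?thesis
    by (simp add: finsupp_def finite_subset flip: supp_def)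
qed

lemma conv_ideal_annihilated:
  fixes f :: "'l::ab_group_add \<Rightarrow> 'k::comm_ring_1"
  assumes "\<forall>i<l. finsupp (a i)" and "\<forall>i<l. conv f (a i) = (\<lambda>_. 0)" and "b \<in> conv_ideal l a"
  shows "conv f b = (\<lambda>_. 0)"
proof -
  obtain c where b: "b = (\<lambda>v. \<Sum>i<l. conv (c i) (a i) v)" and c: "\<forall>i<l. finsupp (c i)"
    using assms(3) unfolding conv_ideal_def by blast
  have "conv f (conv (c i) (a i)) = (\<lambda>_. 0)" if "i < l" for i
    using that assms(1,2) c by (simp add: conv_commute conv_assoc)
  then show ?thesis
    using assms(1) c by (simp add: b conv_sum_right finsupp_conv)
qed

text \<open>\<open>poly_shift B v f\<close> is \<open>B(T) f\<close> for the translation operator \<open>(T f) w = f (w + v)\<close>.\<close>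

definition poly_shift ::
    "'k::comm_ring_1 poly \<Rightarrow> int ^ 'n \<Rightarrow> (int ^ 'n \<Rightarrow> 'k) \<Rightarrow> int ^ 'n \<Rightarrow> 'k" where
  "poly_shift B v f w = (\<Sum>i\<le>degree B. coeff B i * f (w + int i *s v))"

lemma poly_shift_eq_sum:
  assumes "degree B \<le> M"
  shows "poly_shift B v f w = (\<Sum>i\<le>M. coeff B i * f (w + int i *s v))"
  unfolding poly_shift_def
  by (rule sum.mono_neutral_left) (use assms in \<open>auto simp: coeff_eq_0\<close>)

lemma poly_shift_0 [simp]: "poly_shift 0 v f w = 0"
  by (simp add: poly_shift_def)

lemma poly_shift_add: "poly_shift (B + C) v f w = poly_shift B v f w + poly_shift C v f w"
proof -
  define M where "M = max (degree B) (degree C)"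
  have "degree (B + C) \<le> M" "degree B \<le> M" "degree C \<le> M"
    unfolding M_def by (auto intro: degree_add_le)
  then show ?thesis
    by (simp add: poly_shift_eq_sum[of _ M] sum.distrib algebra_simps)
qed

lemma poly_shift_smult: "poly_shift (smult c B) v f w = c * poly_shift B v f w"
  using poly_shift_eq_sum[of "smult c B" "degree B"]
  by (simp add: degree_smult_le poly_shift_def sum_distrib_left mult.assoc)

lemma poly_shift_diff: "poly_shift (B - C) v f w = poly_shift B v f w - poly_shift C v f w"
proof -
  have "B - C = B + smult (-1) C" by simp
  then show ?thesis by (simp only: poly_shift_add poly_shift_smult) simp
qed

lemma poly_shift_monom: "poly_shift (monom c n) v f w = c * f (w + int n *s v)"
  using poly_shift_eq_sum[of "monom c n" n]
  by (simp add: degree_monom_le coeff_monom if_distrib[where f="\<lambda>x. x * _"] cong: if_cong)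

lemma poly_shift_sum:
  "finite K \<Longrightarrow> poly_shift (\<Sum>k\<in>K. B k) v f w = (\<Sum>k\<in>K. poly_shift (B k) v f w)"
  by (induction K rule: finite_induct) (simp_all add: poly_shift_add)

lemma poly_shift_pCons_0: "poly_shift (pCons 0 B) v f w = poly_shift B v f (w + v)"
proof -
  have "poly_shift (pCons 0 B) v f w
      = (\<Sum>i\<le>Suc (degree B). coeff (pCons 0 B) i * f (w + int i *s v))"
    by (rule poly_shift_eq_sum) (simp add: degree_pCons_le)
  also have "\<dots> = (\<Sum>i\<le>degree B. coeff B i * f (w + int (Suc i) *s v))"
    by (subst sum.atMost_Suc_shift) simp
  finally show ?thesis
    by (simp add: poly_shift_def vector_sadd_rdistrib algebra_simps)
qed

lemma poly_shift_mult_eq_0: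
  assumes "\<forall>w. poly_shift B v f w = 0"
  shows "poly_shift (Q * B) v f w = 0"
proof (induction Q arbitrary: w)
  case (pCons a Q)
  then show ?case
    using assms by (simp add: mult_pCons_left poly_shift_add poly_shift_smult poly_shift_pCons_0)
qed simp

lemma poly_shift_X_power_minus_one:
  "poly_shift (monom 1 N - 1) v f w = f (w + int N *s v) - f w"
  using poly_shift_monom[of 1 0 v f w] by (simp add: poly_shift_diff poly_shift_monom flip: monom_eq_1)

lemma line_supported_conv_eq_poly_shift:
  fixes b :: "int ^ 'n \<Rightarrow> 'k::comm_ring_1"
  assumes "finsupp b" and "b \<noteq> (\<lambda>_. 0)" and "supp b \<subseteq> range (\<lambda>k. k *s v)" and "v \<noteq> 0"
  shows "\<exists>B k\<^sub>0. poly B 0 \<noteq> 0 \<and> (\<forall>f w. poly_shift B v f w = conv f b (w + k\<^sub>0 *s v))"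
proof -
  define K where "K = {k. b (k *s v) \<noteq> 0}"
  have inj: "inj (\<lambda>k::int. k *s v)"
    using assms(4) by (auto intro!: injI simp: vec_eq_iff)
  have supp_b: "supp b = (\<lambda>k. k *s v) ` K"
    using assms(3) by (auto simp: K_def supp_def)
  then have "finite K"
    using assms(1) inj by (simp add: finsupp_def finite_image_iff inj_on_subset flip: supp_def)
  moreover have "K \<noteq> {}"
    using assms(2) supp_b by (auto simp: supp_def)
  ultimately have "Max K \<in> K" and K_le: "\<And>k. k \<in> K \<Longrightarrow> k \<le> Max K"
    by auto
  \<comment> \<open>The reversed coefficients put \<open>b (Max K *s v) \<noteq> 0\<close> into the constant term.\<close>
  define B where "B = (\<Sum>k\<in>K. monom (b (k *s v)) (nat (Max K - k)))"
  have "poly B 0 = (\<Sum>k\<in>K. if k = Max K then b (k *s v) else 0)"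
    unfolding B_def poly_0_coeff_0 coeff_sum
    by (rule sum.cong) (use K_le in \<open>force simp: coeff_monom\<close>)+
  also have "\<dots> = b (Max K *s v)"
    using \<open>finite K\<close> \<open>Max K \<in> K\<close> by simp
  finally have "poly B 0 \<noteq> 0"
    using \<open>Max K \<in> K\<close> by (simp add: K_def)
  moreover have "poly_shift B v f w = conv f b (w + Max K *s v)" for f w
  proof -
    have "poly_shift B v f w = (\<Sum>k\<in>K. f ((w + Max K *s v) - k *s v) * b (k *s v))"
      using \<open>finite K\<close> K_le
      by (auto simp: B_def poly_shift_sum poly_shift_monom algebra_simps vector_sub_rdistrib
          intro!: sum.cong)
    also have "\<dots> = conv f b (w + Max K *s v)"
      unfolding conv_def supp_b using inj by (simp add: sum.reindex inj_on_subset)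
    finally show ?thesis .
  qed
  ultimately show ?thesis by blast
qed

lemma periodic_if_conv_line_supported_eq_0:
  fixes b :: "int ^ 'n \<Rightarrow> 'k::field"
  assumes "prime CHAR('k)" and "alg_closed TYPE('k)"
    and "\<And>x::'k. x \<noteq> 0 \<Longrightarrow> \<exists>n>0. x ^ n = 1"
    and "finsupp b" and "b \<noteq> (\<lambda>_. 0)" and "supp b \<subseteq> range (\<lambda>k. k *s v)" and "v \<noteq> 0"
  shows "\<exists>N>0. \<forall>f. conv f b = (\<lambda>_. 0) \<longrightarrow> (\<forall>w. f (w + int N *s v) = f w)"
proof -
  obtain B k\<^sub>0 where "poly B 0 \<noteq> 0" and B: "\<And>f w. poly_shift B v f w = conv f b (w + k\<^sub>0 *s v)"
    using line_supported_conv_eq_poly_shift[OF assms(4-7)] by blast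
  obtain N where "N > 0" and "B dvd monom 1 N - 1"
    using dvd_X_power_minus_one[OF assms(1-3) \<open>poly B 0 \<noteq> 0\<close>] by blast
  then obtain Q where NQ: "monom 1 N - 1 = Q * B"
    by (metis dvdE mult.commute)
  have "f (w + int N *s v) = f w" if "conv f b = (\<lambda>_. 0)" for f w
  proof -
    have "poly_shift (Q * B) v f w = 0"
      by (rule poly_shift_mult_eq_0) (simp add: B that)
    then show ?thesis
      by (simp flip: NQ add: poly_shift_X_power_minus_one)
  qed
  then show ?thesis
    using \<open>N > 0\<close> by blast
qed

text \<open>Additive subgroups \<open>L\<close> are described by \<open>group_closure L = L\<close>.\<close>

lemma group_closure_minimal:
  assumes "S \<subseteq> L" and "group_closure L = L"
  shows "group_closure S \<subseteq> L"
proof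
  fix x assume "x \<in> group_closure S"
  then show "x \<in> L"
  proof induction
    case (base s)
    then show ?case using assms zero_in_group_closure[of L] by auto
  next
    case (diff s t)
    then show ?case using group_closure.diff[of s L t] assms(2) by (auto intro: group_closure.base)
  qed
qed

lemma coset_eq_if_diff_mem:
  assumes "group_closure L = L" and "x - r \<in> L"
  shows "(\<lambda>y. x + y) ` L = (\<lambda>y. r + y) ` L"
proof -
  have closed: "s + t \<in> L" "s - t \<in> L" if "s \<in> L" "t \<in> L" for s t
    using that group_closure_add[of s L t] group_closure.diff[of s L t] assms(1)
    by (auto intro: group_closure.base)
  show ?thesis
  proof (intro equalityI image_subsetI)
    fix y assume "y \<in> L"
    then show "x + y \<in> (\<lambda>y. r + y) ` L"
      using closed(1)[OF assms(2)] by (intro rev_image_eqI[of "x - r + y"]) auto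
    show "r + y \<in> (\<lambda>y. x + y) ` L"
      using closed(2)[OF \<open>y \<in> L\<close> assms(2)] by (intro rev_image_eqI[of "y - (x - r)"]) auto
  qed
qed

lemma int_smult_in_group_closure:
  fixes x :: "int ^ 'n"
  assumes "x \<in> group_closure S"
  shows "k *s x \<in> group_closure S"
proof -
  have nat_smult: "int n *s x \<in> group_closure S" for n
  proof (induction n)
    case (Suc n)
    then show ?case
      using group_closure_add[OF Suc assms] by (simp add: vector_sadd_rdistrib add.commute)
  qed simp
  show ?thesis
  proof (cases "k \<ge> 0")
    case True
    then show ?thesis using nat_smult[of "nat k"] by simp
  next
    case False
    then have "k *s x = - (int (nat (- k)) *s x)" by (simp add: vec_eq_iff)
    then show ?thesis using nat_smult[of "nat (- k)"] by simp
  qed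
qed

lemma sum_smult_in_group_closure:
  fixes u :: "'a \<Rightarrow> int ^ 'n"
  assumes "\<forall>j\<in>J. u j \<in> S"
  shows "(\<Sum>j\<in>J. k j *s u j) \<in> group_closure S"
  using assms
proof (induction J rule: infinite_finite_induct)
  case (insert j J)
  then show ?case
    by (auto intro: group_closure_add int_smult_in_group_closure group_closure.base)
qed simp_all

lemma finite_cosets_if_axis_multiples:
  fixes L :: "(int ^ 'n) set"
  assumes "group_closure L = L" and D_pos: "\<And>i. D i > 0" and D_mem: "\<And>i. D i *s axis i 1 \<in> L"
  shows "finite ((\<lambda>x. (\<lambda>y. x + y) ` L) ` UNIV)"
proof -
  define R where "R = {y::int ^ 'n. \<forall>i. y $ i \<in> {0..<D i}}"
  have "R \<subseteq> vec_lambda ` (PiE UNIV (\<lambda>i. {0..<D i}))"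
    by (auto simp: R_def PiE_iff intro!: image_eqI[of _ _ "\<lambda>i. _ $ i"])
  then have "finite R"
    by (rule finite_subset) (intro finite_imageI finite_PiE; simp)
  have cosets_R: "(\<lambda>x. (\<lambda>y. x + y) ` L) ` UNIV \<subseteq> (\<lambda>x. (\<lambda>y. x + y) ` L) ` R"
  proof (rule image_subsetI)
    fix x :: "int ^ 'n"
    define r where "r = (\<chi> i. x $ i mod D i)"
    have "r \<in> R" using D_pos by (simp add: R_def r_def)
    have "(\<Sum>i\<in>UNIV. (x $ i div D i) *s (D i *s axis i 1)) $ k = (x - r) $ k" for k
    proof -
      have "(\<Sum>i\<in>UNIV. (x $ i div D i) *s (D i *s axis i 1)) $ k
          = (\<Sum>i\<in>UNIV. if i = k then x $ i div D i * D i else 0)"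
        unfolding sum_component by (rule sum.cong) (simp_all add: axis_def)
      then show ?thesis by (simp add: r_def minus_mod_eq_div_mult)
    qed
    then have "x - r = (\<Sum>i\<in>UNIV. (x $ i div D i) *s (D i *s axis i 1))"
      by (simp add: vec_eq_iff)
    also have "\<dots> \<in> group_closure L"
      by (rule sum_smult_in_group_closure) (use D_mem in blast)
    finally have "x - r \<in> L"
      by (simp only: assms(1))
    then show "(\<lambda>y. x + y) ` L \<in> (\<lambda>x. (\<lambda>y. x + y) ` L) ` R"
      using \<open>r \<in> R\<close> coset_eq_if_diff_mem[OF assms(1)] by blast
  qed
  show ?thesis
    using finite_imageI[OF \<open>finite R\<close>] by (rule finite_subset[OF cosets_R])
qed

lemma common_denominator:
  fixes q :: "'a::finite \<Rightarrow> rat"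
  shows "\<exists>D>0. \<exists>z. \<forall>j. of_int D * q j = of_int (z j)"
proof -
  define n where "n j = fst (quotient_of (q j))" for j
  define d where "d j = snd (quotient_of (q j))" for j
  have "d j > 0" for j by (simp add: d_def quotient_of_denom_pos')
  have q: "q j = of_int (n j) / of_int (d j)" for j
    by (rule quotient_of_div) (simp add: n_def d_def)
  define D where "D = (\<Prod>j\<in>UNIV. d j)"
  have "of_int D * q j = of_int (n j * (\<Prod>i\<in>UNIV - {j}. d i))" for j
    using \<open>d j > 0\<close> by (simp add: D_def q prod.remove[of UNIV j])
  moreover have "D > 0"
    unfolding D_def using \<open>\<And>j. d j > 0\<close> by (simp add: prod_pos)
  ultimately show ?thesis
    by (intro exI[of _ D] conjI exI[of _ "\<lambda>j. n j * (\<Prod>i\<in>UNIV - {j}. d i)"]) auto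
qed

lemma lin_indep_int_nonzero:
  assumes "lin_indep_int v"
  shows "v j \<noteq> 0"
proof
  assume "v j = 0"
  define c where "c i = (if i = j then 1 else 0 :: int)" for i
  have "(\<Sum>i\<in>UNIV. c i *s v i) = (\<Sum>i\<in>UNIV. if i = j then v i else 0)"
    by (rule sum.cong) (simp_all add: c_def)
  also have "\<dots> = 0"
    using \<open>v j = 0\<close> by simp
  finally have "c j = 0"
    using assms unfolding lin_indep_int_def by blast
  then show False
    by (simp add: c_def)
qed

lemma lin_indep_int_scale:
  fixes v :: "'n::finite \<Rightarrow> int ^ 'm" and m :: "'n \<Rightarrow> int"
  assumes "lin_indep_int v" and "\<And>j. m j \<noteq> 0"
  shows "lin_indep_int (\<lambda>j. m j *s v j)"
  unfolding lin_indep_int_def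
proof (intro allI impI)
  fix c :: "'n \<Rightarrow> int" and j
  assume "(\<Sum>j\<in>UNIV. c j *s (m j *s v j)) = 0"
  then have "c j * m j = 0"
    using assms(1)[unfolded lin_indep_int_def, rule_format, of "\<lambda>j. c j * m j"]
    by (simp add: vector_smult_assoc)
  then show "c j = 0"
    using assms(2) by simp
qed

definition of_int_vec :: "int ^ 'n \<Rightarrow> 'a::ring_1 ^ 'n" where
  "of_int_vec x = (\<chi> i. of_int (x $ i))"

lemma of_int_vec_sum_smult:
  "of_int_vec (\<Sum>j\<in>J. k j *s u j) = (\<Sum>j\<in>J. of_int (k j) *s (of_int_vec (u j) :: 'a::ring_1 ^ 'n))"
  by (simp add: of_int_vec_def vec_eq_iff sum_component)

lemma of_int_vec_eq_iff [simp]: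
  "(of_int_vec x :: 'a::ring_char_0 ^ 'n) = of_int_vec y \<longleftrightarrow> x = y"
  by (simp add: of_int_vec_def vec_eq_iff)

lemma lin_indep_int_rat_coeffs_eq_0:
  fixes u :: "'n::finite \<Rightarrow> int ^ 'm"
  assumes "lin_indep_int u" and "(\<Sum>j\<in>UNIV. q j *s of_int_vec (u j)) = (0 :: rat ^ 'm)"
  shows "q j = 0"
proof -
  obtain D z where "D > 0" and z: "\<And>j. of_int D * q j = of_int (z j)"
    using common_denominator by blast
  have "of_int_vec (\<Sum>j\<in>UNIV. z j *s u j) = of_int D *s (\<Sum>j\<in>UNIV. q j *s of_int_vec (u j) :: rat ^ 'm)"
    by (simp add: of_int_vec_sum_smult vec.scale_sum_right vector_smult_assoc flip: z)
  also have "\<dots> = of_int_vec 0"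
    using assms(2) by (simp add: of_int_vec_def vec_eq_iff)
  finally have "z j = 0"
    using assms(1) unfolding lin_indep_int_def by simp
  then show ?thesis
    using z[of j] \<open>D > 0\<close> by simp
qed

lemma lin_indep_int_rat_span:
  fixes u :: "'n::finite \<Rightarrow> int ^ 'n"
  assumes "lin_indep_int u"
  shows "\<exists>q. (\<Sum>j\<in>UNIV. q j *s of_int_vec (u j)) = (y :: rat ^ 'n)"
proof -
  define w where "w j = (of_int_vec (u j) :: rat ^ 'n)" for j
  have "inj w"
  proof (rule injI, rule ccontr)
    fix i j assume "w i = w j" and "i \<noteq> j"
    define q where "q k = (if k = i then 1 else if k = j then -1 else 0 :: rat)" for k
    have "(\<Sum>k\<in>UNIV. q k *s w k)
        = (\<Sum>k\<in>UNIV. (if k = i then w k else 0) - (if k = j then w k else 0))"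
      by (rule sum.cong) (use \<open>i \<noteq> j\<close> in \<open>auto simp: q_def\<close>)
    also have "\<dots> = 0"
      using \<open>w i = w j\<close> by (simp add: sum_subtractf)
    finally have "q i = 0"
      using lin_indep_int_rat_coeffs_eq_0[OF assms] by (simp add: w_def)
    then show False by (simp add: q_def)
  qed
  have "\<not> vec.dependent (range w)"
  proof
    assume "vec.dependent (range w)"
    then obtain c where c: "\<exists>x\<in>range w. c x \<noteq> 0" "(\<Sum>x\<in>range w. c x *s x) = 0"
      using vec.dependent_finite[of "range w"] by auto
    then have "(\<Sum>j\<in>UNIV. c (w j) *s w j) = 0"
      by (simp add: sum.reindex[OF \<open>inj w\<close>])
    then show False
      using c(1) lin_indep_int_rat_coeffs_eq_0[OF assms, of "\<lambda>j. c (w j)"] by (auto simp: w_def)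
  qed
  moreover have "vec.dim (UNIV :: (rat ^ 'n) set) \<le> card (range w)"
    unfolding vec_dim_card card_image[OF \<open>inj w\<close>] by simp
  ultimately have "y \<in> vec.span (range w)"
    using vec.card_ge_dim_independent[of "range w" UNIV] by auto
  then obtain c where "(\<Sum>x\<in>range w. c x *s x) = y"
    using vec.span_finite[of "range w"] by auto
  then have "(\<Sum>j\<in>UNIV. c (w j) *s w j) = y"
    unfolding sum.reindex[OF \<open>inj w\<close>] comp_def .
  then show ?thesis
    unfolding w_def by (intro exI[of _ "\<lambda>j. c (of_int_vec (u j))"])
qed

lemma axis_multiple_in_group_closure:
  fixes u :: "'n::finite \<Rightarrow> int ^ 'n"
  assumes "lin_indep_int u"
  shows "\<exists>D>0. D *s axis i 1 \<in> group_closure (range u)"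
proof -
  obtain q where q: "(\<Sum>j\<in>UNIV. q j *s of_int_vec (u j)) = (axis i 1 :: rat ^ 'n)"
    using lin_indep_int_rat_span[OF assms] by blast
  obtain D z where "D > 0" and z: "\<And>j. of_int D * q j = of_int (z j)"
    using common_denominator by blast
  have "of_int_vec (\<Sum>j\<in>UNIV. z j *s u j) = of_int D *s (axis i 1 :: rat ^ 'n)"
    by (simp add: of_int_vec_sum_smult vec.scale_sum_right vector_smult_assoc flip: q z)
  also have "\<dots> = of_int_vec (D *s axis i 1)"
    by (simp add: of_int_vec_def vec_eq_iff axis_def)
  finally have "D *s axis i 1 = (\<Sum>j\<in>UNIV. z j *s u j)"
    by simp
  also have "\<dots> \<in> group_closure (range u)"
    by (rule sum_smult_in_group_closure) auto
  finally show ?thesis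
    using \<open>D > 0\<close> by blast
qed

lemma finite_cosets_if_lin_indep:
  fixes L :: "(int ^ 'n) set" and u :: "'n \<Rightarrow> int ^ 'n"
  assumes "group_closure L = L" and "range u \<subseteq> L" and "lin_indep_int u"
  shows "finite ((\<lambda>x. (\<lambda>y. x + y) ` L) ` UNIV)"
proof -
  obtain D where "\<And>i. D i > 0 \<and> D i *s axis i 1 \<in> group_closure (range u)"
    using axis_multiple_in_group_closure[OF assms(3)] by metis
  moreover have "group_closure (range u) \<subseteq> L"
    using assms(2,1) by (rule group_closure_minimal)
  ultimately show ?thesis
    using finite_cosets_if_axis_multiples[OF assms(1)] by blast
qed

lemma group_closure_period_lattice: "group_closure (period_lattice f) = period_lattice f"
proof (intro equalityI subsetI)
  fix x assume "x \<in> group_closure (period_lattice f)"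
  then show "x \<in> period_lattice f"
  proof induction
    case (diff s t)
    then have s: "f (u + s) = f u" and t: "f (u + t) = f u" for u
      by (auto simp: period_lattice_def fun_eq_iff)
    have "f (u + (s - t)) = f u" for u
    proof -
      have "f (u + (s - t)) = f (u - t + s)" by (simp add: algebra_simps)
      also have "\<dots> = f (u - t + t)" by (simp only: s t)
      finally show ?thesis by simp
    qed
    then show ?case by (simp add: period_lattice_def)
  qed (auto simp: period_lattice_def)
qed (rule group_closure.base, simp)

lemma pluri_periodic_if_lin_indep_periods:
  fixes f :: "int ^ 'n \<Rightarrow> 'k" and u :: "'n \<Rightarrow> int ^ 'n"
  assumes "range u \<subseteq> period_lattice f" and "lin_indep_int u"
  shows "pluri_periodic f"
  unfolding pluri_periodic_def
  using group_closure_period_lattice assms by (rule finite_cosets_if_lin_indep)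

lemma int_combination_in_period_lattice:
  fixes u :: "'a \<Rightarrow> int ^ 'n"
  assumes "range u \<subseteq> period_lattice f"
  shows "(\<Sum>j\<in>J. k j *s u j) \<in> period_lattice f"
proof -
  have "(\<Sum>j\<in>J. k j *s u j) \<in> group_closure (range u)"
    by (rule sum_smult_in_group_closure) simp
  then show ?thesis
    using group_closure_minimal[OF assms group_closure_period_lattice] by blast
qed

theorem corollary5p7:
  fixes p :: nat
    and l :: nat
    and a :: "nat \<Rightarrow> int ^ 'n \<Rightarrow> 'k::field"
    and b :: "'n \<Rightarrow> int ^ 'n \<Rightarrow> 'k"
    and v :: "'n \<Rightarrow> int ^ 'n"
  assumes "prime p" and "CHAR('k) = p"
    and "alg_closed TYPE('k)" and "algebraic_over_prime_field TYPE('k)"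
    and "\<forall>i<l. finsupp (a i)"
    and "\<forall>j. b j \<in> conv_ideal l a \<and> b j \<noteq> (\<lambda>_. 0)"
    and "\<forall>j. supp (b j) \<subseteq> range (\<lambda>k::int. k *s v j)"
    and "lin_indep_int v"
  shows "\<exists>m :: 'n \<Rightarrow> int. (\<forall>j. m j > 0) \<and>
           (\<forall>f :: int ^ 'n \<Rightarrow> 'k. (\<forall>i<l. conv f (a i) = (\<lambda>_. 0)) \<longrightarrow>
              pluri_periodic f \<and>
              {(\<Sum>j\<in>UNIV. (k j * m j) *s v j) | k :: 'n \<Rightarrow> int. True} \<subseteq> period_lattice f)"
proof -
  have char: "prime CHAR('k)"
    using assms(1,2) by simp
  have "\<exists>N>0. \<forall>f. (\<forall>i<l. conv f (a i) = (\<lambda>_. 0)) \<longrightarrow> (\<forall>w. f (w + int N *s v j) = f w)" for j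
    using periodic_if_conv_line_supported_eq_0[OF char assms(3)
        root_of_unity_if_algebraic_over_prime_field[OF char assms(4)]
        conv_ideal_finsupp[OF assms(5)] _ _ lin_indep_int_nonzero[OF assms(8)]]
      conv_ideal_annihilated[OF assms(5)] assms(6,7) by meson
  then obtain N where N_pos: "\<And>j. N j > 0" and N_period:
      "\<And>j f w. \<forall>i<l. conv f (a i) = (\<lambda>_. 0) \<Longrightarrow> f (w + int (N j) *s v j) = f w"
    by metis
  define u where "u j = int (N j) *s v j" for j
  have "lin_indep_int u"
    unfolding u_def using assms(8) N_pos by (simp add: lin_indep_int_scale)
  have "pluri_periodic f \<and>
      {(\<Sum>j\<in>UNIV. (k j * int (N j)) *s v j) | k. True} \<subseteq> period_lattice f"
    if "\<forall>i<l. conv f (a i) = (\<lambda>_. 0)" for f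
  proof
    have periods: "range u \<subseteq> period_lattice f"
      using N_period[OF that] by (auto simp: u_def period_lattice_def)
    then show "pluri_periodic f"
      using \<open>lin_indep_int u\<close> by (rule pluri_periodic_if_lin_indep_periods)
    show "{(\<Sum>j\<in>UNIV. (k j * int (N j)) *s v j) | k. True} \<subseteq> period_lattice f"
      using int_combination_in_period_lattice[OF periods, of _ UNIV]
      by (auto simp: u_def vector_smult_assoc)
  qed
  then show ?thesis
    using N_pos by (intro exI[of _ "\<lambda>j. int (N j)"]) auto
qed

end
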